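(* Consider a neutral evolutionary model on $N$ sites given by a replacement rule $p$ satisfying the fixation assumption described in the context, with replacement probabilities $e_{ij}$, death rates $d_i$, total birth rate $B>0$, site-specific fixation probabilities $\rho_i$, overall fixation probability $\rho=\frac{1}{B}\sum_{i=1}^N d_i\rho_i$ and molecular clock rate $K=Nu\rho$ (for a mutation probability $u>0$ per reproduction). If the death rates $d_i$ are constant over all sites $i=1,\ldots,N$, then $\rho=1/N$, and consequently $K=u$.
   Context: There are $N$ sites $1,\ldots,N$, each always occupied by one individual of type M (mutant) or R (resident); a state is $\mathbf{s}=(s_1,\ldots,s_N)\in\{\mathrm{M},\mathrm{R}\}^N$. A replacement event is a pair $(R,\alpha)$ with $R\subseteq\{1,\ldots,N\}$ and $\alpha:R\to\{1,\ldots,N\}$ (the occupant of each $j\in R$ is replaced by an offspring of the occupant of $\alpha(j)$). A replacement rule is a probability distribution $p(R,\alpha)$ on replacement events, independent of the state. The evolutionary Markov chain: at each time-step an event $(R,\alpha)$ is drawn with probability $p(R,\alpha)$ and the new state is $s_i'=s_i$ if $i\notin R$, $s_i'=s_{\alpha(i)}$ if $i\in R$. Fixation assumption: there exist a site $i$ and a finite sequence of replacement events, each of positive probability, such that if these events occur consecutively (from any initial state) every site ends up carrying the type initially at site $i$. Define $e_{ij}=\sum_{(R,\alpha):\, j\in R,\ \alpha(j)=i}p(R,\alpha)$, $b_i=\sum_j e_{ij}$ (birth rate), $d_i=\sum_j e_{ji}$ (death rate), $B=\sum_{i,j}e_{ij}$. The site-specific fixation probability $\rho_i$ is the probability that the chain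 started from the state with M at site $i$ and R elsewhere is eventually absorbed in $(\mathrm{M},\ldots,\mathrm{M})$. *)

theory Defs
  imports "HOL-Probability.Probability"
begin

datatype ty = Mut | Res

text \<open>Sites are 1..N. A state is a function from sites to types (values outside
  the sites are irrelevant and never changed). A replacement event is a pair
  (R, alpha); alpha is only meaningful on R.\<close>

type_synonym event = "nat set \<times> (nat \<Rightarrow> nat)"
type_synonym state = "nat \<Rightarrow> ty"

definition sites :: "nat \<Rightarrow> nat set" where
  "sites N = {1..N}"

definition valid_event :: "nat \<Rightarrow> event \<Rightarrow> bool" where
  "valid_event N evt \<longleftrightarrow> fst evt \<subseteq> sites N \<and> (\<forall>j\<in>fst evt. snd evt j \<in> sites N)"

definition apply_event :: "event \<Rightarrow> state \<Rightarrow> state" where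
  "apply_event evt s = (\<lambda>i. if i \<in> fst evt then s (snd evt i) else s i)"

definition replacement_rule :: "nat \<Rightarrow> event pmf \<Rightarrow> bool" where
  "replacement_rule N p \<longleftrightarrow> (\<forall>evt \<in> set_pmf p. valid_event N evt)"

definition fixation_assumption :: "nat \<Rightarrow> event pmf \<Rightarrow> bool" where
  "fixation_assumption N p \<longleftrightarrow>
     (\<exists>i\<in>sites N. \<exists>evs :: event list. (\<forall>evt\<in>set evs. pmf p evt > 0) \<and>
        (\<forall>s :: state. \<forall>j\<in>sites N. fold apply_event evs s j = s i))"

definition chain_step :: "event pmf \<Rightarrow> state \<Rightarrow> state pmf" where
  "chain_step p s = map_pmf (\<lambda>evt. apply_event evt s) p"

primrec dist_after :: "event pmf \<Rightarrow> nat \<Rightarrow> state \<Rightarrow> state pmf" where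
  "dist_after p 0 s = return_pmf s"
| "dist_after p (Suc n) s = bind_pmf (dist_after p n s) (chain_step p)"

definition all_mutant :: "nat \<Rightarrow> state set" where
  "all_mutant N = {s. \<forall>j\<in>sites N. s j = Mut}"

definition single_mutant :: "nat \<Rightarrow> state" where
  "single_mutant i = (\<lambda>j. if j = i then Mut else Res)"

text \<open>Site-specific fixation probability: probability of eventual absorption in the
  all-mutant state. Since that state is absorbing, this is the limit of the
  probability of being in it at time n.\<close>
definition fix_prob :: "nat \<Rightarrow> event pmf \<Rightarrow> nat \<Rightarrow> real" where
  "fix_prob N p i = lim (\<lambda>n. measure_pmf.prob (dist_after p n (single_mutant i)) (all_mutant N))"

definition e_rate :: "event pmf \<Rightarrow> nat \<Rightarrow> nat \<Rightarrow> real" where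
  "e_rate p i j = measure_pmf.prob p {evt. j \<in> fst evt \<and> snd evt j = i}"

definition birth_rate :: "nat \<Rightarrow> event pmf \<Rightarrow> nat \<Rightarrow> real" where
  "birth_rate N p i = (\<Sum>j\<in>sites N. e_rate p i j)"

definition death_rate :: "nat \<Rightarrow> event pmf \<Rightarrow> nat \<Rightarrow> real" where
  "death_rate N p i = (\<Sum>j\<in>sites N. e_rate p j i)"

definition total_birth :: "nat \<Rightarrow> event pmf \<Rightarrow> real" where
  "total_birth N p = (\<Sum>i\<in>sites N. \<Sum>j\<in>sites N. e_rate p i j)"

definition overall_fix_prob :: "nat \<Rightarrow> event pmf \<Rightarrow> real" where
  "overall_fix_prob N p = (1 / total_birth N p) * (\<Sum>i\<in>sites N. death_rate N p i * fix_prob N p i)"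

definition molecular_clock :: "nat \<Rightarrow> event pmf \<Rightarrow> real \<Rightarrow> real" where
  "molecular_clock N p u = real N * u * overall_fix_prob N p"

end

theory Submission
  imports Defs
begin

text \<open>Trace every site backwards through the replacement events: after \<open>n\<close> steps the state is
  \<open>s \<circ> A\<^sub>n\<close>, where the ancestor map \<open>A\<^sub>n\<close> sends each site to the site its current occupant
  descends from. A single mutant at \<open>i\<close> fixes exactly when all lineages have coalesced in \<open>i\<close>.
  Coalescence is absorbing, and by the fixation assumption a fixed finite sequence of events
  forces it with positive probability from any ancestor map, so the lineages coalesce almost
  surely and \<open>\<Sum>\<^sub>i \<rho>\<^sub>i = 1\<close>. Since \<open>B = \<Sum>\<^sub>i d\<^sub>i\<close>, a constant death rate \<open>d\<close> gives \<open>B = N d\<close> and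
  \<open>\<rho> = d \<Sum>\<^sub>i \<rho>\<^sub>i / (N d) = 1/N\<close>.\<close>

lemma measure_pmf_prob_bind:
  "measure_pmf.prob (bind_pmf M K) X = (\<integral>x. measure_pmf.prob (K x) X \<partial>M)"
  unfolding measure_pmf_bind
  by (rule measure_pmf.measure_bind[where N="count_space UNIV"])
    (auto simp: measure_pmf_in_subprob_algebra)

lemma integrable_measure_pmf_prob_times:
  "integrable (measure_pmf M) (\<lambda>x. measure_pmf.prob (K x) X * c)"
  by (rule measure_pmf.integrable_const_bound[where B="\<bar>c\<bar>"])
    (auto simp: abs_mult intro!: mult_left_le_one_le)

lemma integrable_measure_pmf_indicator_times:
  "integrable (measure_pmf M) (\<lambda>x. indicator Y x * (c::real))"
  by (rule measure_pmf.integrable_const_bound[where B="\<bar>c\<bar>"]) (auto simp: indicator_def)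

lemma measure_pmf_prob_bind_ge:
  assumes "\<And>x. x \<in> Y \<Longrightarrow> measure_pmf.prob (K x) X \<ge> c" and "c \<ge> 0"
  shows "measure_pmf.prob (bind_pmf M K) X \<ge> measure_pmf.prob M Y * c"
proof -
  have "measure_pmf.prob M Y * c = (\<integral>x. indicator Y x * c \<partial>M)" by simp
  also have "\<dots> \<le> (\<integral>x. measure_pmf.prob (K x) X \<partial>M)"
    using integrable_measure_pmf_prob_times[of M K X 1] integrable_measure_pmf_indicator_times[of M Y c]
      assms
    by (intro integral_mono) (auto simp: indicator_def)
  finally show ?thesis by (simp add: measure_pmf_prob_bind)
qed

lemma measure_pmf_prob_bind_le:
  assumes "\<And>x. x \<in> Y \<Longrightarrow> measure_pmf.prob (K x) X \<le> c"
    and "\<And>x. x \<notin> Y \<Longrightarrow> measure_pmf.prob (K x) X = 0"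
  shows "measure_pmf.prob (bind_pmf M K) X \<le> measure_pmf.prob M Y * c"
proof -
  have "(\<integral>x. measure_pmf.prob (K x) X \<partial>M) \<le> (\<integral>x. indicator Y x * c \<partial>M)"
    using integrable_measure_pmf_prob_times[of M K X 1] integrable_measure_pmf_indicator_times[of M Y c]
      assms
    by (intro integral_mono) (auto simp: indicator_def)
  also have "\<dots> = measure_pmf.prob M Y * c" by simp
  finally show ?thesis by (simp add: measure_pmf_prob_bind)
qed

lemma measure_pmf_prob_Compl: "measure_pmf.prob M (- X) = 1 - measure_pmf.prob M X"
  using measure_pmf.prob_compl[of X M] by (simp add: Compl_eq_Diff_UNIV)

lemma measure_pmf_prob_eq_1_if_subset: "set_pmf M \<subseteq> X \<Longrightarrow> measure_pmf.prob M X = 1"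
  by (subst measure_pmf.prob_eq_1) (auto intro!: AE_pmfI)

lemma decseq_tendsto_zero_if_geometric_subseq:
  fixes f :: "nat \<Rightarrow> real"
  assumes "decseq f" and "\<And>n. 0 \<le> f n" and "\<And>k. f (g k) \<le> c ^ k" and "0 \<le> c" "c < 1"
  shows "f \<longlonglongrightarrow> 0"
proof -
  have bdd: "bdd_below (range f)" using assms(2) by (intro bdd_belowI) auto
  have lim: "f \<longlonglongrightarrow> (INF n. f n)" by (rule LIMSEQ_decseq_INF[OF bdd assms(1)])
  have "(INF n. f n) \<le> c ^ k" for k
    using cINF_lower[OF bdd, of "g k"] assms(3)[of k] by simp
  then have "(INF n. f n) \<le> 0"
    using LIMSEQ_le_const[OF LIMSEQ_power_zero[of c]] assms(4,5) by auto
  moreover have "0 \<le> (INF n. f n)" using assms(2) by (intro cINF_greatest) auto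
  ultimately have "(INF n. f n) = 0" by (rule order_antisym)
  with lim show ?thesis by simp
qed

text \<open>The occupant of site \<open>j\<close> after the event is an offspring of the occupant of
  \<open>parent_map evt j\<close> before it.\<close>

definition parent_map :: "event \<Rightarrow> nat \<Rightarrow> nat" where
  "parent_map evt = (\<lambda>j. if j \<in> fst evt then snd evt j else j)"

lemma apply_event_eq_comp_parent_map: "apply_event evt s = s \<circ> parent_map evt"
  by (auto simp: apply_event_def parent_map_def fun_eq_iff)

lemma parent_map_in_sites:
  "replacement_rule N p \<Longrightarrow> evt \<in> set_pmf p \<Longrightarrow> j \<in> sites N \<Longrightarrow> parent_map evt j \<in> sites N"
  by (auto simp: replacement_rule_def valid_event_def parent_map_def)

primrec ancestor_pmf :: "event pmf \<Rightarrow> nat \<Rightarrow> (nat \<Rightarrow> nat) pmf" where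
  "ancestor_pmf p 0 = return_pmf id"
| "ancestor_pmf p (Suc n) = bind_pmf (ancestor_pmf p n) (\<lambda>A. map_pmf (\<lambda>evt. A \<circ> parent_map evt) p)"

lemma dist_after_eq_map_ancestor_pmf: "dist_after p n s = map_pmf (\<lambda>A. s \<circ> A) (ancestor_pmf p n)"
  by (induction n)
    (simp_all add: map_bind_pmf bind_map_pmf chain_step_def apply_event_eq_comp_parent_map
      map_pmf_comp comp_def)

lemma ancestor_pmf_add:
  "ancestor_pmf p (m + n) = bind_pmf (ancestor_pmf p m) (\<lambda>A. map_pmf (\<lambda>B. A \<circ> B) (ancestor_pmf p n))"
  by (induction n)
    (simp_all add: map_bind_pmf bind_map_pmf bind_assoc_pmf map_pmf_comp comp_def bind_return_pmf')

lemma ancestor_pmf_in_sites: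
  assumes "replacement_rule N p"
  shows "A \<in> set_pmf (ancestor_pmf p n) \<Longrightarrow> j \<in> sites N \<Longrightarrow> A j \<in> sites N"
proof (induction n arbitrary: A j)
  case 0
  then show ?case by simp
next
  case (Suc n)
  then obtain B evt where "B \<in> set_pmf (ancestor_pmf p n)" "evt \<in> set_pmf p" "A = B \<circ> parent_map evt"
    by auto
  with Suc.IH parent_map_in_sites[OF assms] Suc.prems(2) show ?case by simp
qed

definition events_ancestor :: "event list \<Rightarrow> nat \<Rightarrow> nat" where
  "events_ancestor evs = fold (\<lambda>evt A. A \<circ> parent_map evt) evs id"

lemma fold_apply_event_comp:
  "fold apply_event evs (s \<circ> B) = s \<circ> fold (\<lambda>evt A. A \<circ> parent_map evt) evs B"
  by (induction evs arbitrary: B) (simp_all add: apply_event_eq_comp_parent_map comp_assoc)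

lemma fold_apply_event_eq_comp_events_ancestor: "fold apply_event evs s = s \<circ> events_ancestor evs"
  using fold_apply_event_comp[of evs s id] by (simp add: events_ancestor_def)

lemma prob_ancestor_pmf_events_ancestor_ge:
  "measure_pmf.prob (ancestor_pmf p (length evs)) {events_ancestor evs} \<ge> prod_list (map (pmf p) evs)"
proof (induction evs rule: rev_induct)
  case Nil
  then show ?case by (simp add: events_ancestor_def id_def)
next
  case (snoc evt evs)
  have "measure_pmf.prob (ancestor_pmf p (length evs)) {events_ancestor evs} * pmf p evt
     \<le> measure_pmf.prob (ancestor_pmf p (Suc (length evs))) {events_ancestor (evs @ [evt])}"
    unfolding ancestor_pmf.simps
  proof (rule measure_pmf_prob_bind_ge)
    fix A assume "A \<in> {events_ancestor evs}"
    then have "{evt} \<subseteq> (\<lambda>e. A \<circ> parent_map e) -` {events_ancestor (evs @ [evt])}"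
      by (auto simp: events_ancestor_def)
    then show "pmf p evt \<le> measure_pmf.prob (map_pmf (\<lambda>e. A \<circ> parent_map e) p) {events_ancestor (evs @ [evt])}"
      unfolding measure_map_pmf measure_pmf_single[symmetric]
      by (rule measure_pmf.finite_measure_mono) simp
  qed simp
  moreover have "prod_list (map (pmf p) evs) * pmf p evt
      \<le> measure_pmf.prob (ancestor_pmf p (length evs)) {events_ancestor evs} * pmf p evt"
    using snoc by (simp add: mult_right_mono)
  ultimately show ?case by simp
qed

lemma events_ancestor_eq_if_fixating:
  assumes "\<forall>s :: state. \<forall>j\<in>sites N. fold apply_event evs s j = s i" and "j \<in> sites N"
  shows "events_ancestor evs j = i"
  using assms(1)[rule_format, OF assms(2), of "single_mutant i"]
  by (simp add: fold_apply_event_eq_comp_events_ancestor single_mutant_def split: if_splits)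

definition coalesced_at :: "nat \<Rightarrow> nat \<Rightarrow> (nat \<Rightarrow> nat) set" where
  "coalesced_at N i = {A. \<forall>j\<in>sites N. A j = i}"

definition coalesced :: "nat \<Rightarrow> (nat \<Rightarrow> nat) set" where
  "coalesced N = {A. \<forall>j\<in>sites N. \<forall>k\<in>sites N. A j = A k}"

lemma coalesced_comp:
  "A \<in> coalesced N \<Longrightarrow> (\<And>j. j \<in> sites N \<Longrightarrow> B j \<in> sites N) \<Longrightarrow> A \<circ> B \<in> coalesced N"
  unfolding coalesced_def mem_Collect_eq comp_apply by blast

lemma prob_fixation_eq_prob_coalesced_at:
  "measure_pmf.prob (dist_after p n (single_mutant i)) (all_mutant N)
     = measure_pmf.prob (ancestor_pmf p n) (coalesced_at N i)"
proof -
  have "(\<lambda>A. single_mutant i \<circ> A) -` all_mutant N = coalesced_at N i"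
    by (auto simp: all_mutant_def coalesced_at_def single_mutant_def split: if_splits)
  then show ?thesis by (simp add: dist_after_eq_map_ancestor_pmf)
qed

lemma prob_coalesced_at_Suc_ge:
  assumes "replacement_rule N p"
  shows "measure_pmf.prob (ancestor_pmf p n) (coalesced_at N i)
    \<le> measure_pmf.prob (ancestor_pmf p (Suc n)) (coalesced_at N i)"
proof -
  have "measure_pmf.prob (ancestor_pmf p n) (coalesced_at N i) * 1
      \<le> measure_pmf.prob (ancestor_pmf p (Suc n)) (coalesced_at N i)"
    unfolding ancestor_pmf.simps
  proof (rule measure_pmf_prob_bind_ge)
    fix A assume "A \<in> coalesced_at N i"
    then have "set_pmf p \<subseteq> (\<lambda>evt. A \<circ> parent_map evt) -` coalesced_at N i"
      using parent_map_in_sites[OF assms] by (auto simp: coalesced_at_def)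
    then show "1 \<le> measure_pmf.prob (map_pmf (\<lambda>evt. A \<circ> parent_map evt) p) (coalesced_at N i)"
      by (simp add: measure_map_pmf measure_pmf_prob_eq_1_if_subset)
  qed simp
  then show ?thesis by simp
qed

lemma prob_not_coalesced_Suc_le:
  assumes "replacement_rule N p"
  shows "measure_pmf.prob (ancestor_pmf p (Suc n)) (- coalesced N)
    \<le> measure_pmf.prob (ancestor_pmf p n) (- coalesced N)"
proof -
  have "measure_pmf.prob (ancestor_pmf p (Suc n)) (- coalesced N)
      \<le> measure_pmf.prob (ancestor_pmf p n) (- coalesced N) * 1"
    unfolding ancestor_pmf.simps
  proof (rule measure_pmf_prob_bind_le)
    fix A assume "A \<notin> - coalesced N"
    then have "set_pmf p \<inter> (\<lambda>evt. A \<circ> parent_map evt) -` (- coalesced N) = {}"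
      using parent_map_in_sites[OF assms] coalesced_comp by blast
    then show "measure_pmf.prob (map_pmf (\<lambda>evt. A \<circ> parent_map evt) p) (- coalesced N) = 0"
      by (simp add: measure_pmf_zero_iff)
  qed simp
  then show ?thesis by simp
qed

lemma prob_not_coalesced_add_le:
  assumes "replacement_rule N p"
    and fixating: "\<forall>s :: state. \<forall>j\<in>sites N. fold apply_event evs s j = s i"
  shows "measure_pmf.prob (ancestor_pmf p (n + length evs)) (- coalesced N)
     \<le> measure_pmf.prob (ancestor_pmf p n) (- coalesced N) * (1 - prod_list (map (pmf p) evs))"
  unfolding ancestor_pmf_add
proof (rule measure_pmf_prob_bind_le)
  fix A assume "A \<notin> - coalesced N"
  then have "set_pmf (ancestor_pmf p (length evs)) \<inter> (\<lambda>B. A \<circ> B) -` (- coalesced N) = {}"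
    using ancestor_pmf_in_sites[OF assms(1)] coalesced_comp by blast
  then show "measure_pmf.prob (map_pmf (\<lambda>B. A \<circ> B) (ancestor_pmf p (length evs))) (- coalesced N) = 0"
    by (simp add: measure_pmf_zero_iff)
next
  fix A
  have "{events_ancestor evs} \<subseteq> (\<lambda>B. A \<circ> B) -` coalesced N"
    using events_ancestor_eq_if_fixating[OF fixating] by (simp add: coalesced_def)
  then have "prod_list (map (pmf p) evs)
      \<le> measure_pmf.prob (ancestor_pmf p (length evs)) ((\<lambda>B. A \<circ> B) -` coalesced N)"
    by (rule order_trans[OF prob_ancestor_pmf_events_ancestor_ge measure_pmf.finite_measure_mono]) simp_all
  then show "measure_pmf.prob (map_pmf (\<lambda>B. A \<circ> B) (ancestor_pmf p (length evs))) (- coalesced N)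
      \<le> 1 - prod_list (map (pmf p) evs)"
    unfolding measure_map_pmf vimage_Compl measure_pmf_prob_Compl by linarith
qed

lemma prob_not_coalesced_tendsto_zero:
  assumes rr: "replacement_rule N p" and "fixation_assumption N p"
  shows "(\<lambda>n. measure_pmf.prob (ancestor_pmf p n) (- coalesced N)) \<longlonglongrightarrow> 0"
proof -
  define f where "f n = measure_pmf.prob (ancestor_pmf p n) (- coalesced N)" for n
  from assms(2) obtain i evs where pos: "\<forall>evt\<in>set evs. pmf p evt > 0"
    and fixating: "\<forall>s :: state. \<forall>j\<in>sites N. fold apply_event evs s j = s i"
    unfolding fixation_assumption_def by blast
  define q where "q = prod_list (map (pmf p) evs)"
  have "0 < q" unfolding q_def using pos by (induction evs) auto
  moreover have "q \<le> 1"
    using prob_ancestor_pmf_events_ancestor_ge[of p evs]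
      measure_pmf.prob_le_1[of "ancestor_pmf p (length evs)" "{events_ancestor evs}"]
    unfolding q_def by linarith
  moreover have "f (k * length evs) \<le> (1 - q) ^ k" for k
  proof (induction k)
    case (Suc k)
    have "f (Suc k * length evs) \<le> f (k * length evs) * (1 - q)"
      using prob_not_coalesced_add_le[OF rr fixating, of "k * length evs"]
      unfolding f_def q_def by (simp add: add.commute)
    also have "\<dots> \<le> (1 - q) ^ Suc k"
      using mult_right_mono[OF Suc.IH, of "1 - q"] \<open>q \<le> 1\<close> by (simp add: mult_ac)
    finally show ?case .
  qed (simp add: f_def)
  moreover have "decseq f"
    unfolding decseq_Suc_iff f_def using prob_not_coalesced_Suc_le[OF rr] by blast
  moreover have "0 \<le> f n" for n unfolding f_def by simp
  ultimately have "f \<longlonglongrightarrow> 0"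
    by (intro decseq_tendsto_zero_if_geometric_subseq[where g="\<lambda>k. k * length evs" and c="1 - q"])
      auto
  then show ?thesis unfolding f_def .
qed

lemma sum_prob_coalesced_at:
  assumes "replacement_rule N p" and j0: "j0 \<in> sites N"
  shows "(\<Sum>i\<in>sites N. measure_pmf.prob (ancestor_pmf p n) (coalesced_at N i))
    = 1 - measure_pmf.prob (ancestor_pmf p n) (- coalesced N)"
proof -
  let ?M = "ancestor_pmf p n"
  have "(\<Union>i\<in>sites N. coalesced_at N i) \<inter> set_pmf ?M = coalesced N \<inter> set_pmf ?M"
  proof (intro equalityI subsetI)
    fix A assume A: "A \<in> coalesced N \<inter> set_pmf ?M"
    then have "A \<in> coalesced_at N (A j0)"
      using j0 unfolding coalesced_def coalesced_at_def by blast
    moreover have "A j0 \<in> sites N" using A ancestor_pmf_in_sites[OF assms(1)] j0 by blast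
    ultimately show "A \<in> (\<Union>i\<in>sites N. coalesced_at N i) \<inter> set_pmf ?M" using A by blast
  qed (auto simp: coalesced_at_def coalesced_def)
  have "disjoint_family_on (coalesced_at N) (sites N)"
    unfolding disjoint_family_on_def coalesced_at_def using j0 by auto
  then have "(\<Sum>i\<in>sites N. measure_pmf.prob ?M (coalesced_at N i))
      = measure_pmf.prob ?M (\<Union>i\<in>sites N. coalesced_at N i)"
    by (intro measure_pmf.finite_measure_finite_Union[symmetric]) (auto simp: sites_def)
  also have "\<dots> = measure_pmf.prob ?M (coalesced N)"
    by (metis measure_Int_set_pmf \<open>_ \<inter> set_pmf ?M = _\<close>)
  finally show ?thesis by (simp add: measure_pmf_prob_Compl)
qed

lemma sum_fix_prob_eq_1:
  assumes rr: "replacement_rule N p" and "fixation_assumption N p"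
  shows "(\<Sum>i\<in>sites N. fix_prob N p i) = 1"
proof -
  obtain j0 where j0: "j0 \<in> sites N" using assms(2) unfolding fixation_assumption_def by blast
  define P where "P i n = measure_pmf.prob (ancestor_pmf p n) (coalesced_at N i)" for i n
  have "P i \<longlonglongrightarrow> fix_prob N p i" for i
  proof -
    have "incseq (P i)" unfolding incseq_Suc_iff P_def using prob_coalesced_at_Suc_ge[OF rr] by blast
    moreover have "bdd_above (range (P i))" unfolding P_def by (intro bdd_aboveI[of _ 1]) auto
    ultimately have "convergent (P i)" using LIMSEQ_incseq_SUP convergent_def by blast
    then show ?thesis
      unfolding fix_prob_def prob_fixation_eq_prob_coalesced_at P_def[symmetric]
      by (simp add: convergent_LIMSEQ_iff)
  qed
  then have "(\<lambda>n. \<Sum>i\<in>sites N. P i n) \<longlonglongrightarrow> (\<Sum>i\<in>sites N. fix_prob N p i)"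
    by (intro tendsto_sum) auto
  moreover have "(\<lambda>n. \<Sum>i\<in>sites N. P i n) \<longlonglongrightarrow> 1 - 0"
    unfolding P_def sum_prob_coalesced_at[OF rr j0]
    by (intro tendsto_diff tendsto_const prob_not_coalesced_tendsto_zero assms)
  ultimately show ?thesis using LIMSEQ_unique by fastforce
qed

lemma total_birth_eq_sum_death_rate: "total_birth N p = (\<Sum>i\<in>sites N. death_rate N p i)"
  unfolding total_birth_def death_rate_def by (rule sum.swap)

theorem mainTheorem1:
  fixes N :: nat and p :: "event pmf" and u :: real
  assumes "replacement_rule N p"
    and "fixation_assumption N p"
    and "total_birth N p > 0"
    and "u > 0"
    and "\<forall>i\<in>sites N. \<forall>j\<in>sites N. death_rate N p i = death_rate N p j"
  shows "overall_fix_prob N p = 1 / real N \<and> molecular_clock N p u = u"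
proof -
  obtain k where k: "k \<in> sites N" using assms(2) unfolding fixation_assumption_def by blast
  define d where "d = death_rate N p k"
  have death_rate_eq: "death_rate N p i = d" if "i \<in> sites N" for i
    using assms(5) k that unfolding d_def by blast
  have "N \<ge> 1" using k by (simp add: sites_def)
  have total_birth_eq: "total_birth N p = real N * d"
    by (simp add: total_birth_eq_sum_death_rate death_rate_eq sites_def)
  then have "d \<noteq> 0" using assms(3) by auto
  have "(\<Sum>i\<in>sites N. death_rate N p i * fix_prob N p i) = d"
    using sum_fix_prob_eq_1[OF assms(1,2)] by (simp add: death_rate_eq sum_distrib_left[symmetric])
  then have "overall_fix_prob N p = 1 / real N"
    unfolding overall_fix_prob_def total_birth_eq using \<open>d \<noteq> 0\<close> by simp
  then show ?thesis
    unfolding molecular_clock_def using \<open>N \<ge> 1\<close> by simp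
qed

end
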